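(* Let $(D_d)_{d\in\mathbb{N}}$ be an arbitrary sequence of open sets $D_d\subset\mathbb{R}^d$ with $\lambda_d(D_d)=1$, let $(L_d)$ be positive numbers and let \[ \overline{C}_d^0(L)=\{f|_{D_d} \mid f\colon\mathbb{R}^d\to\mathbb{R},\ \sup_{x\in\mathbb R^d}|f(x)|\le 1,\ \operatorname{Lip}(f)\le L_d\}. \] Then \[ n\bigl(\varepsilon,\overline{C}_d^0(L)\bigr)\ge (1-a\varepsilon)\Bigl(\frac{aL_d\sqrt d}{3\sqrt{2e\pi}}\Bigr)^d \] for all $a\ge1$, $\varepsilon\in(0,1/a)$ and $d\in\mathbb{N}$. Consequently, the curse of dimensionality holds for $(\overline{C}_d^0(L))_d$ if $\limsup_{d\to\infty}L_d\sqrt d>0$.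
   Context: $\operatorname{Lip}(f)=\sup_{x\ne y}|f(x)-f(y)|/\|x-y\|_2$. Integration problem: approximate $S_d(f)=\int_{D_d}f(x)\,dx$ for $f\in F_d$ by algorithms $A_{n,d}(f)=\phi_{n,d}(f(x_1),\dots,f(x_n))$ with points $x_j\in D_d$ possibly adaptively chosen and arbitrary $\phi_{n,d}\colon\mathbb R^n\to\mathbb R$. Worst-case error $e(A_{n,d})=\sup_{f\in F_d}|S_d(f)-A_{n,d}(f)|$; information complexity $n(\varepsilon,F_d)$ is the minimal $n$ such that some $A_{n,d}$ has error $\le\varepsilon$. The curse of dimensionality holds if there exist $c,\varepsilon_0,\gamma>0$ with $n(\varepsilon,F_d)\ge c(1+\gamma)^d$ for all $\varepsilon\le\varepsilon_0$ and infinitely many $d$. *)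

theory Defs
  imports "HOL-Analysis.Analysis" "HOL-Probability.Probability"
begin

text \<open>R^d is represented by functions nat => real that are extensional on {..<d}
  (the set PiE {..<d} (\<lambda>_. UNIV)); lambda_d is the product Lebesgue measure.\<close>

definition Rd :: "nat \<Rightarrow> (nat \<Rightarrow> real) set" where
  "Rd d = PiE {..<d} (\<lambda>_. UNIV)"

definition lebesgue_d :: "nat \<Rightarrow> (nat \<Rightarrow> real) measure" where
  "lebesgue_d d = PiM {..<d} (\<lambda>_. lborel)"

definition norm2 :: "nat \<Rightarrow> (nat \<Rightarrow> real) \<Rightarrow> real" where
  "norm2 d x = sqrt (\<Sum>i<d. (x i)\<^sup>2)"

definition lip_le :: "nat \<Rightarrow> real \<Rightarrow> ((nat \<Rightarrow> real) \<Rightarrow> real) \<Rightarrow> bool" where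
  "lip_le d L f \<longleftrightarrow> (\<forall>x\<in>Rd d. \<forall>y\<in>Rd d. x \<noteq> y \<longrightarrow> \<bar>f x - f y\<bar> / norm2 d (\<lambda>i. x i - y i) \<le> L)"

definition lip_class :: "nat \<Rightarrow> (nat \<Rightarrow> real) set \<Rightarrow> real \<Rightarrow> ((nat \<Rightarrow> real) \<Rightarrow> real) set" where
  "lip_class d D L = {restrict f D | f. (\<forall>x\<in>Rd d. \<bar>f x\<bar> \<le> 1) \<and> lip_le d L f}"

definition integ :: "nat \<Rightarrow> (nat \<Rightarrow> real) set \<Rightarrow> ((nat \<Rightarrow> real) \<Rightarrow> real) \<Rightarrow> real" where
  "integ d D f = (LINT x:D|lebesgue_d d. f x)"

fun info :: "(nat \<Rightarrow> real list \<Rightarrow> (nat \<Rightarrow> real)) \<Rightarrow> ((nat \<Rightarrow> real) \<Rightarrow> real) \<Rightarrow> nat \<Rightarrow> real list" where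
  "info pt f 0 = []"
| "info pt f (Suc k) = info pt f k @ [f (pt k (info pt f k))]"

definition alg :: "(nat \<Rightarrow> real list \<Rightarrow> (nat \<Rightarrow> real)) \<Rightarrow> (real list \<Rightarrow> real) \<Rightarrow> nat \<Rightarrow> ((nat \<Rightarrow> real) \<Rightarrow> real) \<Rightarrow> real" where
  "alg pt phi n f = phi (info pt f n)"

definition wc_error :: "nat \<Rightarrow> (nat \<Rightarrow> real) set \<Rightarrow> ((nat \<Rightarrow> real) \<Rightarrow> real) set \<Rightarrow>
    (nat \<Rightarrow> real list \<Rightarrow> (nat \<Rightarrow> real)) \<Rightarrow> (real list \<Rightarrow> real) \<Rightarrow> nat \<Rightarrow> ereal" where
  "wc_error d D F pt phi n = (SUP f\<in>F. ereal \<bar>integ d D f - alg pt phi n f\<bar>)"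

text \<open>Information complexity n(eps, F_d); infinity if no algorithm achieves eps.\<close>
definition info_compl :: "nat \<Rightarrow> (nat \<Rightarrow> real) set \<Rightarrow> real \<Rightarrow> ((nat \<Rightarrow> real) \<Rightarrow> real) set \<Rightarrow> ereal" where
  "info_compl d D eps F = (INF n\<in>{n. \<exists>pt phi. (\<forall>k ys. pt k ys \<in> D) \<and> wc_error d D F pt phi n \<le> ereal eps}.
       ereal (real n))"

definition curse :: "(nat \<Rightarrow> (nat \<Rightarrow> real) set) \<Rightarrow> (nat \<Rightarrow> ((nat \<Rightarrow> real) \<Rightarrow> real) set) \<Rightarrow> bool" where
  "curse D F \<longleftrightarrow> (\<exists>c eps0 \<gamma>. c > 0 \<and> eps0 > 0 \<and> \<gamma> > 0 \<and>
     (\<forall>eps. 0 < eps \<and> eps \<le> eps0 \<longrightarrow>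
        (\<exists>\<^sub>\<infinity>d. ereal (c * (1 + \<gamma>) ^ d) \<le> info_compl d (D d) eps (F d))))"

end

theory Submission
  imports Defs
begin

text \<open>An algorithm that reads only zeros at its \<open>n\<close> sample points cannot distinguish
  \<open>f\<close> from \<open>-f\<close>, where \<open>f(x) = min(t, L\<^sub>d \<cdot> dist(x, sample points))\<close> and \<open>t = 1/a\<close>.
  This \<open>f\<close> lies in the class, vanishes at the sample points and equals \<open>t\<close> outside \<open>n\<close>
  balls of radius \<open>t/L\<^sub>d\<close>, whose total volume is at most
  \<open>n (\<surd>(2e\<pi>) t/(L\<^sub>d\<surd>d))\<^sup>d\<close> by comparing the indicator of a ball with a product
  of Gaussian densities. So the error is at least \<open>t (1 - n \<cdot> volume)\<close>, which forces
  \<open>n \<ge> (1 - a\<epsilon>)(a L\<^sub>d \<surd>d/\<surd>(2e\<pi>))\<^sup>d\<close>. For the curse, choose \<open>a\<close> so large that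
  the base of this power is at least \<open>2\<close> in the infinitely many dimensions where
  \<open>L\<^sub>d\<surd>d\<close> stays above some \<open>\<delta> > 0\<close>.\<close>

lemma norm2_eq_L2_set: "norm2 d x = L2_set x {..<d}"
  by (simp add: norm2_def L2_set_def)

lemma norm2_nonneg: "0 \<le> norm2 d x"
  by (simp add: norm2_def sum_nonneg)

lemma norm2_diff_commute: "norm2 d (\<lambda>i. x i - y i) = norm2 d (\<lambda>i. y i - x i)"
  by (simp add: norm2_def power2_commute)

lemma norm2_diff_triangle:
  "norm2 d (\<lambda>i. x i - z i) \<le> norm2 d (\<lambda>i. x i - y i) + norm2 d (\<lambda>i. y i - z i)"
  using L2_set_triangle_ineq[of "\<lambda>i. x i - y i" "\<lambda>i. y i - z i" "{..<d}"]
  by (simp add: norm2_eq_L2_set)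

lemma abs_norm2_diff_le:
  "\<bar>norm2 d (\<lambda>i. x i - p i) - norm2 d (\<lambda>i. y i - p i)\<bar> \<le> norm2 d (\<lambda>i. x i - y i)"
  using norm2_diff_triangle[of d x p y] norm2_diff_triangle[of d y p x]
    norm2_diff_commute[of d x y] by linarith

lemma lip_leI:
  assumes "\<And>x y. \<bar>f x - f y\<bar> \<le> L * norm2 d (\<lambda>i. x i - y i)" "0 \<le> L"
  shows "lip_le d L f"
  unfolding lip_le_def
proof (intro ballI impI)
  fix x y
  show "\<bar>f x - f y\<bar> / norm2 d (\<lambda>i. x i - y i) \<le> L"
  proof (cases "norm2 d (\<lambda>i. x i - y i) = 0")
    case False
    then have "norm2 d (\<lambda>i. x i - y i) > 0"
      using norm2_nonneg[of d] by (metis less_eq_real_def)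
    then show ?thesis using assms(1)[of x y] by (simp add: divide_le_eq)
  qed (use assms in simp)
qed

lemma abs_Min_diff_le:
  fixes A B :: "real set"
  assumes "finite A" "A \<noteq> {}" "finite B" "B \<noteq> {}"
    and "\<forall>a\<in>A. \<exists>b\<in>B. b \<le> a + c" and "\<forall>b\<in>B. \<exists>a\<in>A. a \<le> b + c"
  shows "\<bar>Min A - Min B\<bar> \<le> c"
proof -
  obtain b where "b \<in> B" "b \<le> Min A + c" using assms Min_in[of A] by blast
  then have "Min B \<le> Min A + c" using assms(3) by (meson Min_le order_trans)
  moreover obtain a where "a \<in> A" "a \<le> Min B + c" using assms Min_in[of B] by blast
  then have "Min A \<le> Min B + c" using assms(1) by (meson Min_le order_trans)
  ultimately show ?thesis by linarith
qed

section \<open>Volume of Euclidean balls\<close>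

lemma nn_integral_scaled_normal_density:
  assumes "c \<ge> 0" "s > 0"
  shows "(\<integral>\<^sup>+ y. ennreal (c * normal_density m s y) \<partial>lborel) = ennreal c"
proof -
  have "(\<integral>\<^sup>+ y. ennreal (c * normal_density m s y) \<partial>lborel)
      = ennreal c * (\<integral>\<^sup>+ y. ennreal (normal_density m s y) \<partial>lborel)"
    using assms by (simp add: ennreal_mult nn_integral_cmult)
  also have "(\<integral>\<^sup>+ y. ennreal (normal_density m s y) \<partial>lborel) = 1"
    using assms by (subst nn_integral_eq_integral) auto
  finally show ?thesis by simp
qed

text \<open>The indicator of the ball of radius \<open>r\<close> around \<open>p\<close> is dominated by
  \<open>e\<^sup>d\<^sup>/\<^sup>2\<close> times a product of Gaussians of variance \<open>r\<^sup>2/d\<close>; integrating gives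
  \<open>\<lambda>\<^sub>d(B) \<le> (\<surd>(2e\<pi>) r/\<surd>d)\<^sup>d\<close>, which is sharp up to a factor polynomial in \<open>d\<close>.\<close>

lemma ball_indicator_le_gaussian:
  assumes "d \<ge> 1" "r > 0"
  defines "\<sigma> \<equiv> r / sqrt d"
  defines "c \<equiv> sqrt (2 * pi * \<sigma>\<^sup>2)"
  shows "indicator {x. norm2 d (\<lambda>i. x i - p i) < r} x
         \<le> ennreal (exp (d/2)) * (\<Prod>i<d. ennreal (c * normal_density (p i) \<sigma> (x i)))"
proof (cases "norm2 d (\<lambda>i. x i - p i) < r")
  case True
  define S where "S = (\<Sum>i<d. (x i - p i)\<^sup>2)"
  have "sqrt S < r" using True by (simp add: norm2_def S_def)
  then have "S < r\<^sup>2" using real_sqrt_less_iff[of S "r\<^sup>2"] assms(2) by simp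
  have \<sigma>: "\<sigma> > 0" "2 * \<sigma>\<^sup>2 = 2 * r\<^sup>2 / d" using assms by (simp_all add: \<sigma>_def power_divide)
  have "c * normal_density (p i) \<sigma> (x i) = exp (- (x i - p i)\<^sup>2 / (2 * \<sigma>\<^sup>2))" for i
    using \<sigma> by (simp add: normal_density_def c_def)
  then have "(\<Prod>i<d. c * normal_density (p i) \<sigma> (x i)) = exp (- S * d / (2 * r\<^sup>2))"
    unfolding \<sigma>(2) S_def
    by (simp add: exp_sum[symmetric] sum_divide_distrib[symmetric] sum_negf sum_distrib_right)
  moreover have "- S * d / (2 * r\<^sup>2) > - (d/2)"
    using \<open>S < r\<^sup>2\<close> assms by (simp add: field_simps)
  ultimately have "ennreal 1 \<le> ennreal (exp (d/2) * (\<Prod>i<d. c * normal_density (p i) \<sigma> (x i)))"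
    by (intro ennreal_leI) (simp add: exp_add[symmetric])
  also have "\<dots> = ennreal (exp (d/2)) * ennreal (\<Prod>i<d. c * normal_density (p i) \<sigma> (x i))"
    by (rule ennreal_mult) (auto simp: c_def intro: prod_nonneg)
  also have "ennreal (\<Prod>i<d. c * normal_density (p i) \<sigma> (x i))
      = (\<Prod>i<d. ennreal (c * normal_density (p i) \<sigma> (x i)))"
    by (rule prod_ennreal[symmetric]) (simp add: c_def)
  finally show ?thesis using True by simp
qed simp

lemma emeasure_norm2_ball_le:
  assumes "d \<ge> 1" "r > 0"
  shows "emeasure (lebesgue_d d) {x \<in> space (lebesgue_d d). norm2 d (\<lambda>i. x i - p i) < r}
     \<le> ennreal ((sqrt (2 * exp 1 * pi) * r / sqrt d) ^ d)"
proof -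
  define M where "M = lebesgue_d d"
  define \<sigma> where "\<sigma> = r / sqrt d"
  define c where "c = sqrt (2 * pi * \<sigma>\<^sup>2)"
  define B where "B = {x \<in> space M. norm2 d (\<lambda>i. x i - p i) < r}"
  have \<sigma>: "\<sigma> > 0" and c: "c > 0" using assms by (simp_all add: \<sigma>_def c_def)
  interpret product_sigma_finite "\<lambda>_::nat. lborel :: real measure"
    by (simp add: product_sigma_finite_def lborel.sigma_finite_measure_axioms)
  have "B \<in> sets M"
    unfolding B_def M_def lebesgue_d_def norm2_def by measurable
  then have "emeasure M B = (\<integral>\<^sup>+ x. indicator B x \<partial>M)"
    by simp
  also have "\<dots> \<le> (\<integral>\<^sup>+ x. ennreal (exp (d/2)) * (\<Prod>i<d. ennreal (c * normal_density (p i) \<sigma> (x i))) \<partial>M)"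
    using ball_indicator_le_gaussian[OF assms, of p]
    by (intro nn_integral_mono) (auto simp: B_def \<sigma>_def c_def indicator_def)
  also have "\<dots> = ennreal (exp (d/2)) * (\<Prod>i<d. \<integral>\<^sup>+ y. ennreal (c * normal_density (p i) \<sigma> y) \<partial>lborel)"
    unfolding M_def lebesgue_d_def
    by (subst nn_integral_cmult, measurable) (subst product_nn_integral_prod; simp)
  also have "\<dots> = ennreal (exp (d/2)) * ennreal c ^ d"
    using \<sigma> c by (subst nn_integral_scaled_normal_density) auto
  also have "\<dots> = ennreal (exp (d/2) * c ^ d)"
    using c by (simp add: ennreal_mult ennreal_power)
  also have "exp (d/2) * c ^ d = (sqrt (2 * exp 1 * pi) * r / sqrt d) ^ d"
  proof -
    have "sqrt (exp 1) = exp (1/2)"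
      by (intro real_sqrt_unique) (auto simp: power2_eq_square exp_add[symmetric])
    then have "exp (d/2) = sqrt (exp 1) ^ d"
      using exp_of_nat_mult[of d "1/2"] by simp
    moreover have "c = sqrt (2 * pi) * r / sqrt d"
      using \<sigma> assms by (simp add: c_def \<sigma>_def real_sqrt_mult real_sqrt_divide)
    ultimately show ?thesis
      by (simp add: power_mult_distrib[symmetric] real_sqrt_mult mult_ac)
  qed
  finally show ?thesis unfolding B_def M_def .
qed

section \<open>The fooling function\<close>

text \<open>\<open>min(t, L \<cdot> dist(x, P))\<close>, written so that it is also defined for \<open>P = {}\<close>.\<close>

definition fooling_fun :: "nat \<Rightarrow> real \<Rightarrow> real \<Rightarrow> (nat \<Rightarrow> real) set \<Rightarrow> (nat \<Rightarrow> real) \<Rightarrow> real" where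
  "fooling_fun d L t P x = Min (insert t ((\<lambda>p. L * norm2 d (\<lambda>i. x i - p i)) ` P))"

context
  fixes d :: nat and L t :: real and P :: "(nat \<Rightarrow> real) set"
  assumes finite_P: "finite P" and L_nonneg: "0 \<le> L" and t_nonneg: "0 \<le> t"
begin

lemma fooling_fun_le: "fooling_fun d L t P x \<le> t"
  by (simp add: fooling_fun_def finite_P)

lemma fooling_fun_nonneg: "0 \<le> fooling_fun d L t P x"
  by (simp add: fooling_fun_def finite_P t_nonneg L_nonneg norm2_nonneg)

lemma fooling_fun_vanishes:
  assumes "p \<in> P" shows "fooling_fun d L t P p = 0"
proof -
  have "fooling_fun d L t P p \<le> L * norm2 d (\<lambda>i. p i - p i)"
    unfolding fooling_fun_def using assms finite_P
    by (intro Min.coboundedI) (auto intro: image_eqI[where x = p])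
  then show ?thesis using fooling_fun_nonneg[of p] by (simp add: norm2_def)
qed

lemma fooling_fun_eq_far:
  assumes "\<And>p. p \<in> P \<Longrightarrow> t \<le> L * norm2 d (\<lambda>i. x i - p i)"
  shows "fooling_fun d L t P x = t"
proof -
  have "t \<le> fooling_fun d L t P x"
    unfolding fooling_fun_def using assms finite_P by simp
  then show ?thesis using fooling_fun_le[of x] by simp
qed

lemma fooling_fun_lipschitz:
  "\<bar>fooling_fun d L t P x - fooling_fun d L t P y\<bar> \<le> L * norm2 d (\<lambda>i. x i - y i)"
proof -
  define c where "c = L * norm2 d (\<lambda>i. x i - y i)"
  define g where "g z p = L * norm2 d (\<lambda>i. z i - p i)" for z p
  have c: "0 \<le> c" unfolding c_def using L_nonneg norm2_nonneg by simp
  have g_close: "\<bar>g x p - g y p\<bar> \<le> c" for p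
    unfolding g_def c_def using abs_norm2_diff_le[of d x p y] L_nonneg
    by (simp add: abs_mult right_diff_distrib[symmetric] mult_left_mono)
  have g: "g y p \<le> g x p + c" "g x p \<le> g y p + c" for p
    using g_close[of p] by (simp_all add: abs_le_iff)
  have close: "\<forall>a\<in>insert t (g z ` P). \<exists>b\<in>insert t (g z' ` P). b \<le> a + c"
    if "\<And>p. g z' p \<le> g z p + c" for z z'
    using c that by (auto intro: bexI[of _ t] rev_bexI)
  have "\<forall>a\<in>insert t (g x ` P). \<exists>b\<in>insert t (g y ` P). b \<le> a + c"
    using g(1) by (rule close)
  moreover have "\<forall>b\<in>insert t (g y ` P). \<exists>a\<in>insert t (g x ` P). a \<le> b + c"
    using g(2) by (rule close)
  ultimately show ?thesis
    using abs_Min_diff_le finite_P unfolding fooling_fun_def c_def g_def by simp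
qed

lemma fooling_fun_measurable: "fooling_fun d L t P \<in> borel_measurable (lebesgue_d d)"
  unfolding fooling_fun_def using finite_P
proof (induction P rule: finite_induct)
  case (insert p P)
  have "(\<lambda>x. L * norm2 d (\<lambda>i. x i - p i)) \<in> borel_measurable (lebesgue_d d)"
    unfolding lebesgue_d_def norm2_def by measurable
  with insert show ?case by (simp add: insert_commute[of t])
qed simp

end

lemma fooling_fun_in_lip_class:
  assumes "finite P" "L > 0" "0 \<le> t" "t \<le> 1"
  shows "restrict (fooling_fun d L t P) D \<in> lip_class d D L"
    and "restrict (\<lambda>x. - fooling_fun d L t P x) D \<in> lip_class d D L"
proof -
  have bounded: "\<bar>fooling_fun d L t P x\<bar> \<le> 1" for x
    using fooling_fun_le[of P L t d x] fooling_fun_nonneg[of P L t d x] assms by simp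
  have lip: "lip_le d L (fooling_fun d L t P)" "lip_le d L (\<lambda>x. - fooling_fun d L t P x)"
    using fooling_fun_lipschitz[of P L t d] assms by (auto intro!: lip_leI simp: abs_minus_commute)
  show "restrict (fooling_fun d L t P) D \<in> lip_class d D L"
    using bounded lip(1) unfolding lip_class_def by blast
  show "restrict (\<lambda>x. - fooling_fun d L t P x) D \<in> lip_class d D L"
    using bounded lip(2) unfolding lip_class_def by force
qed

text \<open>Only the balls of radius \<open>t/L\<close> around the points of \<open>P\<close> keep the fooling
  function below its maximum \<open>t\<close>.\<close>

lemma indicator_le_fooling_fun_plus_balls:
  assumes "finite P" "L > 0" "0 \<le> t" "x \<in> S"
  shows "ennreal t * indicator D x \<le> ennreal (indicator D x * fooling_fun d L t P x)
           + (\<Sum>p\<in>P. ennreal t * indicator {y \<in> S. norm2 d (\<lambda>i. y i - p i) < t / L} x)"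
proof (cases "x \<in> D \<and> (\<forall>p\<in>P. t / L \<le> norm2 d (\<lambda>i. x i - p i))")
  case True
  then have "fooling_fun d L t P x = t"
    using assms True by (intro fooling_fun_eq_far) (auto simp: pos_divide_le_eq mult.commute)
  then show ?thesis using True by simp
next
  case False
  show ?thesis
  proof (cases "x \<in> D")
    case True
    then obtain p where p: "p \<in> P" "norm2 d (\<lambda>i. x i - p i) < t / L" using False by auto
    have "ennreal t * indicator {y \<in> S. norm2 d (\<lambda>i. y i - p i) < t / L} x
        \<le> (\<Sum>p\<in>P. ennreal t * indicator {y \<in> S. norm2 d (\<lambda>i. y i - p i) < t / L} x)"
      using p assms(1) by (intro member_le_sum) auto
    then show ?thesis using True p assms(4) by (intro add_increasing) auto
  qed simp
qed

lemma ennreal_integ_eq_nn_integral: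
  assumes "emeasure (lebesgue_d d) D = 1" "f \<in> borel_measurable (lebesgue_d d)"
    and "\<And>x. 0 \<le> f x" "\<And>x. f x \<le> t"
  shows "ennreal (integ d D f) = (\<integral>\<^sup>+ x. ennreal (indicator D x * f x) \<partial>lebesgue_d d)"
proof -
  have D: "D \<in> sets (lebesgue_d d)" using assms(1) emeasure_notin_sets by fastforce
  have "(\<integral>\<^sup>+ x. ennreal (indicator D x * f x) \<partial>lebesgue_d d)
      \<le> (\<integral>\<^sup>+ x. ennreal t * indicator D x \<partial>lebesgue_d d)"
    using assms by (intro nn_integral_mono) (auto simp: indicator_def intro: ennreal_leI)
  also have "\<dots> = ennreal t"
    using D assms(1) by (simp add: nn_integral_cmult_indicator)
  finally have "(\<integral>\<^sup>+ x. ennreal (indicator D x * f x) \<partial>lebesgue_d d) < \<top>"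
    using ennreal_less_top le_less_trans by blast
  then show ?thesis
    unfolding integ_def set_lebesgue_integral_def using assms D
    by (subst integral_eq_nn_integral) (auto simp: mult.commute)
qed

lemma integ_fooling_fun_ge:
  assumes "d \<ge> 1" "emeasure (lebesgue_d d) D = 1" "L > 0" "t > 0" "finite P"
  shows "t * (1 - card P * (sqrt (2 * exp 1 * pi) * (t / L) / sqrt d) ^ d)
           \<le> integ d D (fooling_fun d L t P)"
proof -
  define M where "M = lebesgue_d d"
  define V where "V = (sqrt (2 * exp 1 * pi) * (t / L) / sqrt d) ^ d"
  define f where "f = fooling_fun d L t P"
  define B where "B p = {x \<in> space M. norm2 d (\<lambda>i. x i - p i) < t / L}" for p
  have V: "V \<ge> 0" unfolding V_def using assms by simp
  have D: "D \<in> sets M" using assms(2) emeasure_notin_sets unfolding M_def by fastforce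
  have f: "0 \<le> f x" "f x \<le> t" for x
    using assms fooling_fun_nonneg fooling_fun_le unfolding f_def by auto
  have f_meas: "(\<lambda>x. indicator D x * f x) \<in> borel_measurable M"
    using D fooling_fun_measurable[of P L t d] assms unfolding M_def f_def by simp
  have B: "B p \<in> sets M" "emeasure M (B p) \<le> ennreal V" for p
    using emeasure_norm2_ball_le[of d "t / L" p] assms
    unfolding B_def M_def V_def lebesgue_d_def norm2_def by (measurable, simp)
  have pointwise: "ennreal t * indicator D x \<le> ennreal (indicator D x * f x) + (\<Sum>p\<in>P. ennreal t * indicator (B p) x)"
    if "x \<in> space M" for x
    unfolding f_def B_def using assms that by (intro indicator_le_fooling_fun_plus_balls) auto
  have "(\<Sum>p\<in>P. ennreal t * emeasure M (B p)) \<le> (\<Sum>p\<in>P. ennreal (t * V))"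
    using B(2) assms(4) by (intro sum_mono) (simp add: ennreal_mult' mult_left_mono)
  also have "\<dots> = ennreal (card P * t * V)"
    using assms(4) V by (simp add: mult.assoc ennreal_of_nat_eq_real_of_nat ennreal_mult)
  finally have balls: "(\<Sum>p\<in>P. ennreal t * emeasure M (B p)) \<le> ennreal (card P * t * V)" .
  have "ennreal t = (\<integral>\<^sup>+ x. ennreal t * indicator D x \<partial>M)"
    using D assms(2) unfolding M_def by (simp add: nn_integral_cmult_indicator)
  also have "\<dots> \<le> (\<integral>\<^sup>+ x. ennreal (indicator D x * f x) + (\<Sum>p\<in>P. ennreal t * indicator (B p) x) \<partial>M)"
    by (rule nn_integral_mono) (rule pointwise)
  also have "\<dots> = (\<integral>\<^sup>+ x. ennreal (indicator D x * f x) \<partial>M) + (\<Sum>p\<in>P. ennreal t * emeasure M (B p))"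
    using f_meas B by (subst nn_integral_add) (auto simp: nn_integral_sum nn_integral_cmult_indicator)
  also have "(\<integral>\<^sup>+ x. ennreal (indicator D x * f x) \<partial>M) = ennreal (integ d D f)"
    unfolding M_def f_def using assms fooling_fun_measurable[of P L t d] f[unfolded f_def]
    by (intro ennreal_integ_eq_nn_integral[symmetric]) auto
  also have "ennreal (integ d D f) + (\<Sum>p\<in>P. ennreal t * emeasure M (B p))
      \<le> ennreal (integ d D f) + ennreal (card P * t * V)"
    using balls by (rule add_left_mono)
  finally have "ennreal t \<le> ennreal (integ d D f) + ennreal (card P * t * V)" .
  moreover have "0 \<le> integ d D f"
    unfolding integ_def set_lebesgue_integral_def using f by (intro Bochner_Integration.integral_nonneg) simp
  ultimately have "t \<le> integ d D f + card P * t * V"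
    using assms(4) V by (simp add: ennreal_plus[symmetric] del: ennreal_plus)
  then show ?thesis unfolding V_def f_def by (simp add: algebra_simps)
qed

lemma info_eq_replicate_zero:
  assumes "\<forall>k<n. g (pt k (replicate k 0)) = 0"
  shows "k \<le> n \<Longrightarrow> info pt g k = replicate k 0"
proof (induction k)
  case (Suc k)
  then show ?case using assms by (simp add: replicate_append_same)
qed simp

text \<open>The algorithm returns the same value on \<open>f\<close> and \<open>-f\<close>, so on one of them it errs
  by at least \<open>\<bar>S(f)\<bar>\<close>.\<close>

lemma wc_error_ge_abs_integ:
  assumes "restrict f D \<in> F" "restrict (\<lambda>x. - f x) D \<in> F"
    and "info pt (restrict f D) n = info pt (restrict (\<lambda>x. - f x) D) n"
  shows "ereal \<bar>integ d D f\<bar> \<le> wc_error d D F pt phi n"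
proof -
  have integ_restrict: "integ d D (restrict g D) = integ d D g" for g
    unfolding integ_def set_lebesgue_integral_def
    by (intro Bochner_Integration.integral_cong) (auto simp: indicator_def)
  have error_le: "ereal \<bar>integ d D g - alg pt phi n g\<bar> \<le> wc_error d D F pt phi n" if "g \<in> F" for g
    unfolding wc_error_def using that by (rule SUP_upper)
  define v where "v = alg pt phi n (restrict f D)"
  have "integ d D (\<lambda>x. - f x) = - integ d D f"
    by (simp add: integ_def set_lebesgue_integral_def)
  then have "ereal \<bar>integ d D f - v\<bar> \<le> wc_error d D F pt phi n"
    and "ereal \<bar>- integ d D f - v\<bar> \<le> wc_error d D F pt phi n"
    using error_le[OF assms(1)] error_le[OF assms(2)] assms(3)
    unfolding v_def integ_restrict by (simp_all add: alg_def)
  moreover have "\<bar>integ d D f\<bar> \<le> \<bar>integ d D f - v\<bar> \<or> \<bar>integ d D f\<bar> \<le> \<bar>- integ d D f - v\<bar>"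
    by arith
  ultimately show ?thesis by (auto elim: order_trans[rotated])
qed

lemma wc_error_lip_class_ge:
  assumes "d \<ge> 1" "emeasure (lebesgue_d d) D = 1" "L > 0" "0 < t" "t \<le> 1"
    and "\<forall>k ys. pt k ys \<in> D"
  shows "ereal (t * (1 - n * (sqrt (2 * exp 1 * pi) * (t / L) / sqrt d) ^ d))
           \<le> wc_error d D (lip_class d D L) pt phi n"
proof -
  text \<open>The points queried along all-zero answers; the fooling functions vanish there, so
    these are exactly the points queried for \<open>\<pm>f\<close>.\<close>
  define P where "P = (\<lambda>k. pt k (replicate k 0)) ` {..<n}"
  define f where "f = fooling_fun d L t P"
  have P: "finite P" "card P \<le> n" unfolding P_def by (auto intro: card_image_le[THEN order_trans])
  have "f (pt k (replicate k 0)) = 0" if "k < n" for k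
    unfolding f_def using that assms by (intro fooling_fun_vanishes) (auto simp: P_def P)
  then have "info pt (restrict f D) n = replicate n 0"
    and "info pt (restrict (\<lambda>x. - f x) D) n = replicate n 0"
    using assms(6) info_eq_replicate_zero[of n _ pt n] by auto
  then have "ereal \<bar>integ d D f\<bar> \<le> wc_error d D (lip_class d D L) pt phi n"
    using fooling_fun_in_lip_class[OF P(1)] assms unfolding f_def
    by (intro wc_error_ge_abs_integ) auto
  moreover have "t * (1 - n * (sqrt (2 * exp 1 * pi) * (t / L) / sqrt d) ^ d)
      \<le> t * (1 - card P * (sqrt (2 * exp 1 * pi) * (t / L) / sqrt d) ^ d)"
    using P assms by (intro mult_left_mono diff_left_mono mult_right_mono) auto
  moreover have "\<dots> \<le> integ d D f"
    unfolding f_def using assms P by (intro integ_fooling_fun_ge) auto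
  ultimately show ?thesis by (auto elim!: order_trans[rotated])
qed

lemma info_compl_lip_class_ge:
  assumes "d \<ge> 1" "emeasure (lebesgue_d d) D = 1" "L > 0"
    and "a \<ge> 1" "0 < eps" "eps < 1 / a"
  shows "ereal ((1 - a * eps) * (a * L * sqrt d / sqrt (2 * exp 1 * pi)) ^ d)
           \<le> info_compl d D eps (lip_class d D L)"
  unfolding info_compl_def
proof (rule INF_greatest)
  fix n
  assume "n \<in> {n. \<exists>pt phi. (\<forall>k ys. pt k ys \<in> D) \<and> wc_error d D (lip_class d D L) pt phi n \<le> ereal eps}"
  then obtain pt phi where pt: "\<forall>k ys. pt k ys \<in> D"
    and error: "wc_error d D (lip_class d D L) pt phi n \<le> ereal eps"
    by blast
  define X where "X = a * L * sqrt d / sqrt (2 * exp 1 * pi)"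
  have X: "X > 0" using assms unfolding X_def by simp
  have "ereal (1 / a * (1 - n * (sqrt (2 * exp 1 * pi) * (1 / a / L) / sqrt d) ^ d))
      \<le> wc_error d D (lip_class d D L) pt phi n"
    using assms pt by (intro wc_error_lip_class_ge) auto
  also note error
  also have "sqrt (2 * exp 1 * pi) * (1 / a / L) / sqrt d = 1 / X"
    using assms unfolding X_def by (simp add: field_simps)
  finally have "1 / a * (1 - n * (1 / X) ^ d) \<le> eps" by simp
  then have "1 - a * eps \<le> n / X ^ d"
    using assms by (simp add: field_simps power_one_over)
  then show "ereal ((1 - a * eps) * X ^ d) \<le> ereal (real n)"
    using X by (simp add: field_simps)
qed

lemma curse_if_limsup_pos:
  assumes "K > 0"
    and bound: "\<And>a eps d. a \<ge> 1 \<Longrightarrow> 0 < eps \<Longrightarrow> eps < 1 / a \<Longrightarrow> d \<ge> 1 \<Longrightarrow>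
      ereal ((1 - a * eps) * (a * L d * sqrt d / K) ^ d) \<le> info_compl d (D d) eps (F d)"
    and "limsup (\<lambda>d. ereal (L d * sqrt d)) > 0"
  shows "curse D F"
proof -
  obtain \<delta> where \<delta>: "0 < \<delta>" "ereal \<delta> < limsup (\<lambda>d. ereal (L d * sqrt d))"
    using ereal_dense2[OF assms(3)] by auto
  have often_large: "\<exists>\<^sub>F d in sequentially. \<delta> < L d * sqrt d"
  proof (rule ccontr)
    assume "\<not> ?thesis"
    then have "limsup (\<lambda>d. ereal (L d * sqrt d)) \<le> ereal \<delta>"
      by (intro Limsup_bounded) (simp add: not_frequently not_less)
    with \<delta> show False by simp
  qed
  define a where "a = max 1 (2 * K / \<delta>)"
  have a: "a \<ge> 1" "2 \<le> a * \<delta> / K"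
    using \<delta> assms(1) by (auto simp: a_def field_simps max_def)
  have "\<exists>\<^sub>\<infinity>d. ereal (1 / 2 * (1 + 1) ^ d) \<le> info_compl d (D d) eps (F d)"
    if eps: "0 < eps" "eps \<le> 1 / (2 * a)" for eps
  proof -
    have large: "ereal (1 / 2 * (1 + 1) ^ d) \<le> info_compl d (D d) eps (F d)"
      if "d \<ge> 1" "\<delta> < L d * sqrt d" for d
    proof -
      have "2 \<le> a * L d * sqrt d / K"
        using a that assms(1) \<delta> by (smt (verit) divide_right_mono mult_left_mono mult.assoc)
      moreover have "1 / 2 \<le> 1 - a * eps" using eps a by (simp add: field_simps)
      ultimately have "1 / 2 * (1 + 1) ^ d \<le> (1 - a * eps) * (a * L d * sqrt d / K) ^ d"
        by (intro mult_mono power_mono) auto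
      also have "ereal \<dots> \<le> info_compl d (D d) eps (F d)"
        using bound[OF a(1) eps(1) _ that(1)] eps a by (simp add: field_simps)
      finally show ?thesis by simp
    qed
    have "\<forall>\<^sub>F d in sequentially.
        \<delta> < L d * sqrt d \<longrightarrow> ereal (1 / 2 * (1 + 1) ^ d) \<le> info_compl d (D d) eps (F d)"
      using eventually_ge_at_top[of 1] by (rule eventually_mono) (blast intro: large)
    then have "\<exists>\<^sub>F d in sequentially. ereal (1 / 2 * (1 + 1) ^ d) \<le> info_compl d (D d) eps (F d)"
      using often_large by (rule frequently_mp)
    then show ?thesis by (simp add: cofinite_eq_sequentially)
  qed
  then show ?thesis
    unfolding curse_def using a
    by (intro exI[of _ "1 / 2"] exI[of _ "1 / (2 * a)"] exI[of _ 1]) auto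
qed

theorem proposition3p2:
  fixes D :: "nat \<Rightarrow> (nat \<Rightarrow> real) set" and L :: "nat \<Rightarrow> real"
  assumes "\<forall>d\<ge>1. openin (top_of_set (Rd d)) (D d)"
    and "\<forall>d\<ge>1. emeasure (lebesgue_d d) (D d) = 1"
    and "\<forall>d\<ge>1. L d > 0"
  shows "(\<forall>a eps d. a \<ge> 1 \<and> 0 < eps \<and> eps < 1 / a \<and> d \<ge> 1 \<longrightarrow>
            ereal ((1 - a * eps) * ((a * L d * sqrt (real d)) / (3 * sqrt (2 * exp 1 * pi))) ^ d)
              \<le> info_compl d (D d) eps (lip_class d (D d) (L d)))
       \<and> (limsup (\<lambda>d. ereal (L d * sqrt (real d))) > 0
            \<longrightarrow> curse D (\<lambda>d. lip_class d (D d) (L d)))"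
proof -
  define K where "K = 3 * sqrt (2 * exp 1 * pi)"
  have bound: "ereal ((1 - a * eps) * (a * L d * sqrt d / K) ^ d)
      \<le> info_compl d (D d) eps (lip_class d (D d) (L d))"
    if "a \<ge> 1" "0 < eps" "eps < 1 / a" "d \<ge> 1" for a eps d
  proof -
    have "(1 - a * eps) * (a * L d * sqrt d / K) ^ d
        \<le> (1 - a * eps) * (a * L d * sqrt d / sqrt (2 * exp 1 * pi)) ^ d"
      using that assms(3) by (intro mult_left_mono power_mono) (auto simp: K_def field_simps)
    also have "ereal \<dots> \<le> info_compl d (D d) eps (lip_class d (D d) (L d))"
      using that assms(2,3) by (intro info_compl_lip_class_ge) auto
    finally show ?thesis by simp
  qed
  moreover have "curse D (\<lambda>d. lip_class d (D d) (L d))"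
    if "limsup (\<lambda>d. ereal (L d * sqrt d)) > 0"
    using bound that by (intro curse_if_limsup_pos[of K]) (auto simp: K_def)
  ultimately show ?thesis unfolding K_def by blast
qed

end
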